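(* (i) In every weakly orthomodular lattice, $(a\equiv b)\to_0((a\equiv c)\equiv(b\equiv c)) = 1$ for all elements $a,b,c$. (ii) There exists a weakly orthomodular lattice containing elements $a,b,c$ with $(a\equiv b)\cap((b\equiv c)\cup(a\equiv c)) \ne ((a\equiv b)\cap(b\equiv c))\cup((a\equiv b)\cap(a\equiv c))$.
   Context: A weakly orthomodular lattice (WOML) is an ortholattice $(L,\cap,\cup,{}',0,1)$ satisfying $(a'\cap(a\cup b))\cup b'\cup(a\cap b)=1$ for all $a,b$. Notation: $a\equiv b=(a\cap b)\cup(a'\cap b')$ and $a\to_0 b=a'\cup b$. *)

theory Defs
  imports Main
begin

definition ortholattice_on ::
  "'a set \<Rightarrow> ('a \<Rightarrow> 'a \<Rightarrow> 'a) \<Rightarrow> ('a \<Rightarrow> 'a \<Rightarrow> 'a) \<Rightarrow> ('a \<Rightarrow> 'a) \<Rightarrow> 'a \<Rightarrow> 'a \<Rightarrow> bool"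
  where
  "ortholattice_on A meet join compl z u \<longleftrightarrow>
     z \<in> A \<and> u \<in> A \<and>
     (\<forall>x\<in>A. \<forall>y\<in>A. meet x y \<in> A \<and> join x y \<in> A) \<and>
     (\<forall>x\<in>A. compl x \<in> A) \<and>
     (\<forall>x\<in>A. \<forall>y\<in>A. meet x y = meet y x \<and> join x y = join y x) \<and>
     (\<forall>x\<in>A. \<forall>y\<in>A. \<forall>w\<in>A. meet (meet x y) w = meet x (meet y w) \<and>
                              join (join x y) w = join x (join y w)) \<and>
     (\<forall>x\<in>A. \<forall>y\<in>A. meet x (join x y) = x \<and> join x (meet x y) = x) \<and>
     (\<forall>x\<in>A. meet z x = z \<and> join u x = u) \<and>
     (\<forall>x\<in>A. compl (compl x) = x) \<and>
     (\<forall>x\<in>A. \<forall>y\<in>A. meet x y = x \<longrightarrow> meet (compl y) (compl x) = compl y) \<and>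
     (\<forall>x\<in>A. meet x (compl x) = z \<and> join x (compl x) = u)"

definition woml_on ::
  "'a set \<Rightarrow> ('a \<Rightarrow> 'a \<Rightarrow> 'a) \<Rightarrow> ('a \<Rightarrow> 'a \<Rightarrow> 'a) \<Rightarrow> ('a \<Rightarrow> 'a) \<Rightarrow> 'a \<Rightarrow> 'a \<Rightarrow> bool"
  where
  "woml_on A meet join compl z u \<longleftrightarrow>
     ortholattice_on A meet join compl z u \<and>
     (\<forall>a\<in>A. \<forall>b\<in>A.
        join (join (meet (compl a) (join a b)) (compl b)) (meet a b) = u)"

definition bieq :: "('a \<Rightarrow> 'a \<Rightarrow> 'a) \<Rightarrow> ('a \<Rightarrow> 'a \<Rightarrow> 'a) \<Rightarrow> ('a \<Rightarrow> 'a) \<Rightarrow> 'a \<Rightarrow> 'a \<Rightarrow> 'a"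
  where "bieq meet join compl a b = join (meet a b) (meet (compl a) (compl b))"

definition impl0 :: "('a \<Rightarrow> 'a \<Rightarrow> 'a) \<Rightarrow> ('a \<Rightarrow> 'a) \<Rightarrow> 'a \<Rightarrow> 'a \<Rightarrow> 'a"
  where "impl0 join compl a b = join (compl a) b"

end

theory Submission
  imports Defs
begin

(* The orthomodular proof goes through with the lattice order replaced by
   x \<sqsubseteq>\<^sub>1 y, i.e. x' \<union> (x \<inter> y) = 1. In every ortholattice this relation contains the
   order and satisfies the orthomodular law x \<le> y \<Longrightarrow> y \<sqsubseteq>\<^sub>1 x \<union> (x' \<inter> y); the WOML
   axiom makes it contrapositive and transitive, hence a preorder compatible with
   meets and joins. The Foulis-Holland argument then gives
   (e \<union> f) \<inter> (g \<union> n) \<sqsubseteq>\<^sub>1 (e \<inter> g) \<union> (f \<inter> n) whenever e, g \<le> k' and f, n \<le> k.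
   Taking e = a \<inter> b, f = a' \<inter> b', g = (a \<inter> c) \<union> (b \<inter> c), n = (a' \<inter> c') \<union> (b' \<inter> c')
   and k = f \<union> n yields p \<inter> (q \<union> r) \<sqsubseteq>\<^sub>1 q \<inter> r for p = a \<equiv> b, q = a \<equiv> c, r = b \<equiv> c.
   So x = p \<inter> (q \<equiv> r)' = p \<inter> (q \<inter> r)' \<inter> (q \<union> r) satisfies x \<sqsubseteq>\<^sub>1 (q \<inter> r) \<inter> (q \<inter> r)' = 0,
   whence x = 0 and p \<rightarrow>\<^sub>0 (q \<equiv> r) = x' = 1.
   Part (ii) is witnessed by a 14-element WOML, checked by computation. *)

locale ortholattice =
  fixes A :: "'a set"
    and meet :: "'a \<Rightarrow> 'a \<Rightarrow> 'a" (infixl \<open>\<sqinter>\<close> 70)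
    and join :: "'a \<Rightarrow> 'a \<Rightarrow> 'a" (infixl \<open>\<squnion>\<close> 65)
    and compl :: "'a \<Rightarrow> 'a" (\<open>_\<^sup>\<bottom>\<close> [1000] 1000)
    and zero :: 'a (\<open>\<zero>\<close>)
    and one :: 'a (\<open>\<one>\<close>)
  assumes ortholattice_on: "ortholattice_on A meet join compl zero one"
begin

lemma zero_closed [simp]: "\<zero> \<in> A"
  and one_closed [simp]: "\<one> \<in> A"
  and meet_closed [simp]: "x \<in> A \<Longrightarrow> y \<in> A \<Longrightarrow> x \<sqinter> y \<in> A"
  and join_closed [simp]: "x \<in> A \<Longrightarrow> y \<in> A \<Longrightarrow> x \<squnion> y \<in> A"
  and compl_closed [simp]: "x \<in> A \<Longrightarrow> x\<^sup>\<bottom> \<in> A"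
  using ortholattice_on by (auto simp: ortholattice_on_def)

lemma meet_comm: "x \<in> A \<Longrightarrow> y \<in> A \<Longrightarrow> x \<sqinter> y = y \<sqinter> x"
  and join_comm: "x \<in> A \<Longrightarrow> y \<in> A \<Longrightarrow> x \<squnion> y = y \<squnion> x"
  and meet_assoc: "x \<in> A \<Longrightarrow> y \<in> A \<Longrightarrow> w \<in> A \<Longrightarrow> x \<sqinter> y \<sqinter> w = x \<sqinter> (y \<sqinter> w)"
  and join_assoc: "x \<in> A \<Longrightarrow> y \<in> A \<Longrightarrow> w \<in> A \<Longrightarrow> x \<squnion> y \<squnion> w = x \<squnion> (y \<squnion> w)"
  and meet_absorb: "x \<in> A \<Longrightarrow> y \<in> A \<Longrightarrow> x \<sqinter> (x \<squnion> y) = x"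
  and join_absorb: "x \<in> A \<Longrightarrow> y \<in> A \<Longrightarrow> x \<squnion> (x \<sqinter> y) = x"
  and zero_meet: "x \<in> A \<Longrightarrow> \<zero> \<sqinter> x = \<zero>"
  and one_join: "x \<in> A \<Longrightarrow> \<one> \<squnion> x = \<one>"
  and compl_compl [simp]: "x \<in> A \<Longrightarrow> x\<^sup>\<bottom>\<^sup>\<bottom> = x"
  and compl_antitone: "x \<in> A \<Longrightarrow> y \<in> A \<Longrightarrow> x \<sqinter> y = x \<Longrightarrow> y\<^sup>\<bottom> \<sqinter> x\<^sup>\<bottom> = y\<^sup>\<bottom>"
  and meet_compl: "x \<in> A \<Longrightarrow> x \<sqinter> x\<^sup>\<bottom> = \<zero>"
  and join_compl: "x \<in> A \<Longrightarrow> x \<squnion> x\<^sup>\<bottom> = \<one>"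
  using ortholattice_on by (auto simp: ortholattice_on_def)

definition le :: "'a \<Rightarrow> 'a \<Rightarrow> bool" (infix \<open>\<sqsubseteq>\<close> 50)
  where "x \<sqsubseteq> y \<longleftrightarrow> x \<sqinter> y = x"

lemma meet_idem: "x \<in> A \<Longrightarrow> x \<sqinter> x = x"
  by (metis join_absorb meet_absorb meet_closed)

lemma le_iff_join: "x \<in> A \<Longrightarrow> y \<in> A \<Longrightarrow> x \<sqsubseteq> y \<longleftrightarrow> x \<squnion> y = y"
  unfolding le_def by (metis join_absorb join_comm meet_absorb meet_comm)

lemma le_refl [simp]: "x \<in> A \<Longrightarrow> x \<sqsubseteq> x"
  by (simp add: le_def meet_idem)

lemma le_trans: "x \<sqsubseteq> y \<Longrightarrow> y \<sqsubseteq> w \<Longrightarrow> x \<in> A \<Longrightarrow> y \<in> A \<Longrightarrow> w \<in> A \<Longrightarrow> x \<sqsubseteq> w"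
  unfolding le_def by (metis meet_assoc)

lemma le_antisym: "x \<sqsubseteq> y \<Longrightarrow> y \<sqsubseteq> x \<Longrightarrow> x \<in> A \<Longrightarrow> y \<in> A \<Longrightarrow> x = y"
  unfolding le_def by (metis meet_comm)

lemma meet_le1 [simp]: "x \<in> A \<Longrightarrow> y \<in> A \<Longrightarrow> x \<sqinter> y \<sqsubseteq> x"
  unfolding le_def by (metis meet_assoc meet_comm meet_idem)

lemma meet_le2 [simp]: "x \<in> A \<Longrightarrow> y \<in> A \<Longrightarrow> x \<sqinter> y \<sqsubseteq> y"
  unfolding le_def by (metis meet_assoc meet_idem)

lemma le_meetI: "x \<sqsubseteq> y \<Longrightarrow> x \<sqsubseteq> w \<Longrightarrow> x \<in> A \<Longrightarrow> y \<in> A \<Longrightarrow> w \<in> A \<Longrightarrow> x \<sqsubseteq> y \<sqinter> w"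
  unfolding le_def by (metis meet_assoc)

lemma join_ge1 [simp]: "x \<in> A \<Longrightarrow> y \<in> A \<Longrightarrow> x \<sqsubseteq> x \<squnion> y"
  unfolding le_def by (simp add: meet_absorb)

lemma join_ge2 [simp]: "x \<in> A \<Longrightarrow> y \<in> A \<Longrightarrow> y \<sqsubseteq> x \<squnion> y"
  by (metis join_comm join_ge1)

lemma le_joinI: "x \<sqsubseteq> w \<Longrightarrow> y \<sqsubseteq> w \<Longrightarrow> x \<in> A \<Longrightarrow> y \<in> A \<Longrightarrow> w \<in> A \<Longrightarrow> x \<squnion> y \<sqsubseteq> w"
  by (metis join_assoc join_closed le_iff_join)

lemma le_meetI1: "x \<sqsubseteq> w \<Longrightarrow> x \<in> A \<Longrightarrow> y \<in> A \<Longrightarrow> w \<in> A \<Longrightarrow> x \<sqinter> y \<sqsubseteq> w"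
  by (rule le_trans[OF meet_le1]) auto

lemma le_meetI2: "y \<sqsubseteq> w \<Longrightarrow> x \<in> A \<Longrightarrow> y \<in> A \<Longrightarrow> w \<in> A \<Longrightarrow> x \<sqinter> y \<sqsubseteq> w"
  by (rule le_trans[OF meet_le2]) auto

lemma le_joinI1: "x \<sqsubseteq> y \<Longrightarrow> x \<in> A \<Longrightarrow> y \<in> A \<Longrightarrow> w \<in> A \<Longrightarrow> x \<sqsubseteq> y \<squnion> w"
  by (rule le_trans[OF _ join_ge1]) auto

lemma le_joinI2: "x \<sqsubseteq> w \<Longrightarrow> x \<in> A \<Longrightarrow> y \<in> A \<Longrightarrow> w \<in> A \<Longrightarrow> x \<sqsubseteq> y \<squnion> w"
  by (rule le_trans[OF _ join_ge2]) auto

lemma meet_mono: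
  "x \<sqsubseteq> y \<Longrightarrow> x' \<sqsubseteq> y' \<Longrightarrow> x \<in> A \<Longrightarrow> y \<in> A \<Longrightarrow> x' \<in> A \<Longrightarrow> y' \<in> A \<Longrightarrow> x \<sqinter> x' \<sqsubseteq> y \<sqinter> y'"
  by (intro le_meetI le_meetI1 le_meetI2) auto

lemma join_mono:
  "x \<sqsubseteq> y \<Longrightarrow> x' \<sqsubseteq> y' \<Longrightarrow> x \<in> A \<Longrightarrow> y \<in> A \<Longrightarrow> x' \<in> A \<Longrightarrow> y' \<in> A \<Longrightarrow> x \<squnion> x' \<sqsubseteq> y \<squnion> y'"
  by (intro le_joinI le_joinI1 le_joinI2) auto

lemma le_meet_iff: "x \<in> A \<Longrightarrow> y \<in> A \<Longrightarrow> w \<in> A \<Longrightarrow> x \<sqsubseteq> y \<sqinter> w \<longleftrightarrow> x \<sqsubseteq> y \<and> x \<sqsubseteq> w"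
  by (meson le_meetI le_trans meet_closed meet_le1 meet_le2)

lemma join_le_iff: "x \<in> A \<Longrightarrow> y \<in> A \<Longrightarrow> w \<in> A \<Longrightarrow> x \<squnion> y \<sqsubseteq> w \<longleftrightarrow> x \<sqsubseteq> w \<and> y \<sqsubseteq> w"
  by (meson le_joinI le_trans join_closed join_ge1 join_ge2)

lemma compl_le_compl: "x \<sqsubseteq> y \<Longrightarrow> x \<in> A \<Longrightarrow> y \<in> A \<Longrightarrow> y\<^sup>\<bottom> \<sqsubseteq> x\<^sup>\<bottom>"
  unfolding le_def by (rule compl_antitone)

lemma le_compl_swap: "x \<sqsubseteq> y\<^sup>\<bottom> \<Longrightarrow> x \<in> A \<Longrightarrow> y \<in> A \<Longrightarrow> y \<sqsubseteq> x\<^sup>\<bottom>"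
  by (metis compl_closed compl_compl compl_le_compl)

lemma le_compl_trans: "x \<sqsubseteq> y \<Longrightarrow> w \<sqsubseteq> y\<^sup>\<bottom> \<Longrightarrow> x \<in> A \<Longrightarrow> y \<in> A \<Longrightarrow> w \<in> A \<Longrightarrow> x \<sqsubseteq> w\<^sup>\<bottom>"
  by (metis compl_closed le_compl_swap le_trans)

lemma zero_le [simp]: "x \<in> A \<Longrightarrow> \<zero> \<sqsubseteq> x"
  by (simp add: le_def zero_meet)

lemma le_one [simp]: "x \<in> A \<Longrightarrow> x \<sqsubseteq> \<one>"
  by (simp add: le_iff_join join_comm[of x \<one>] one_join)

lemma le_zero_iff: "x \<in> A \<Longrightarrow> x \<sqsubseteq> \<zero> \<longleftrightarrow> x = \<zero>"
  using le_antisym zero_le by fastforce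

lemma one_le_iff: "x \<in> A \<Longrightarrow> \<one> \<sqsubseteq> x \<longleftrightarrow> x = \<one>"
  using le_antisym le_one by fastforce

lemma compl_join:
  assumes "x \<in> A" "y \<in> A"
  shows "(x \<squnion> y)\<^sup>\<bottom> = x\<^sup>\<bottom> \<sqinter> y\<^sup>\<bottom>"
proof (rule le_antisym)
  show "(x \<squnion> y)\<^sup>\<bottom> \<sqsubseteq> x\<^sup>\<bottom> \<sqinter> y\<^sup>\<bottom>"
    using assms by (intro le_meetI compl_le_compl) auto
  have "x \<squnion> y \<sqsubseteq> (x\<^sup>\<bottom> \<sqinter> y\<^sup>\<bottom>)\<^sup>\<bottom>"
    using assms le_compl_swap[of "x\<^sup>\<bottom> \<sqinter> y\<^sup>\<bottom>" x] le_compl_swap[of "x\<^sup>\<bottom> \<sqinter> y\<^sup>\<bottom>" y]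
    by (intro le_joinI) auto
  then show "x\<^sup>\<bottom> \<sqinter> y\<^sup>\<bottom> \<sqsubseteq> (x \<squnion> y)\<^sup>\<bottom>"
    by (rule le_compl_swap) (simp_all add: assms)
qed (simp_all add: assms)

lemma compl_meet: "x \<in> A \<Longrightarrow> y \<in> A \<Longrightarrow> (x \<sqinter> y)\<^sup>\<bottom> = x\<^sup>\<bottom> \<squnion> y\<^sup>\<bottom>"
  using arg_cong[OF compl_join[of "x\<^sup>\<bottom>" "y\<^sup>\<bottom>"], of compl] by simp

lemma zero_join [simp]: "x \<in> A \<Longrightarrow> \<zero> \<squnion> x = x"
  using le_iff_join[of \<zero> x] by simp

lemma join_zero [simp]: "x \<in> A \<Longrightarrow> x \<squnion> \<zero> = x"
  using join_comm[of x \<zero>] by simp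

lemma compl_zero [simp]: "\<zero>\<^sup>\<bottom> = \<one>"
  using join_compl[of \<zero>] by simp

lemma compl_one [simp]: "\<one>\<^sup>\<bottom> = \<zero>"
  using compl_compl[of \<zero>] by simp

lemma meet_zero [simp]: "x \<in> A \<Longrightarrow> x \<sqinter> \<zero> = \<zero>"
  using meet_comm[of x \<zero>] zero_meet[of x] by simp

(* x \<sqsubseteq>\<^sub>1 y says that the Sasaki implication x \<rightarrow>\<^sub>1 y is 1; in an orthomodular
   lattice this is equivalent to x \<le> y. *)
definition sasaki_le :: "'a \<Rightarrow> 'a \<Rightarrow> bool" (infix \<open>\<sqsubseteq>\<^sub>1\<close> 50)
  where "x \<sqsubseteq>\<^sub>1 y \<longleftrightarrow> x\<^sup>\<bottom> \<squnion> (x \<sqinter> y) = \<one>"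

lemma le_imp_sasaki_le: "x \<sqsubseteq> y \<Longrightarrow> x \<in> A \<Longrightarrow> y \<in> A \<Longrightarrow> x \<sqsubseteq>\<^sub>1 y"
  unfolding sasaki_le_def le_def by (simp add: join_comm[of "x\<^sup>\<bottom>" x] join_compl)

lemma sasaki_le_refl: "x \<in> A \<Longrightarrow> x \<sqsubseteq>\<^sub>1 x"
  by (simp add: le_imp_sasaki_le)

lemma sasaki_le_zeroD:
  assumes "x \<sqsubseteq>\<^sub>1 \<zero>" "x \<in> A"
  shows "x = \<zero>"
proof -
  have "x\<^sup>\<bottom> = \<one>"
    using assms by (simp add: sasaki_le_def)
  then have "x\<^sup>\<bottom>\<^sup>\<bottom> = \<zero>"
    by simp
  then show ?thesis
    using assms by simp
qed

lemma sasaki_le_iff_meet: "x \<in> A \<Longrightarrow> y \<in> A \<Longrightarrow> x \<sqsubseteq>\<^sub>1 y \<longleftrightarrow> x \<sqsubseteq>\<^sub>1 x \<sqinter> y"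
  unfolding sasaki_le_def by (simp add: meet_assoc[symmetric] meet_idem)

lemma sasaki_le_orthomodular:
  assumes "x \<sqsubseteq> y" "x \<in> A" "y \<in> A"
  shows "y \<sqsubseteq>\<^sub>1 x \<squnion> (x\<^sup>\<bottom> \<sqinter> y)"
proof -
  have "x \<squnion> (x\<^sup>\<bottom> \<sqinter> y) \<sqsubseteq> y"
    using assms by (intro le_joinI) auto
  then have "y \<sqinter> (x \<squnion> (x\<^sup>\<bottom> \<sqinter> y)) = x \<squnion> (x\<^sup>\<bottom> \<sqinter> y)"
    using assms by (simp add: le_def meet_comm[of y])
  moreover have "y\<^sup>\<bottom> \<squnion> (x \<squnion> (x\<^sup>\<bottom> \<sqinter> y)) = (x\<^sup>\<bottom> \<sqinter> y)\<^sup>\<bottom> \<squnion> (x\<^sup>\<bottom> \<sqinter> y)"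
    using assms by (simp add: compl_meet join_assoc[symmetric] join_comm[of "y\<^sup>\<bottom>" x])
  ultimately show ?thesis
    using assms by (simp add: sasaki_le_def join_comm[of "(x\<^sup>\<bottom> \<sqinter> y)\<^sup>\<bottom>"] join_compl)
qed

end

locale woml = ortholattice +
  assumes weak_orthomodular:
    "a \<in> A \<Longrightarrow> b \<in> A \<Longrightarrow> (a\<^sup>\<bottom> \<sqinter> (a \<squnion> b)) \<squnion> b\<^sup>\<bottom> \<squnion> (a \<sqinter> b) = \<one>"

lemma woml_on_imp_woml: "woml_on A meet join compl z u \<Longrightarrow> woml A meet join compl z u"
  unfolding woml_on_def woml_def woml_axioms_def ortholattice_def by blast

context woml
begin

lemma sasaki_le_contrapos:
  assumes "x \<sqsubseteq>\<^sub>1 y" "x \<in> A" "y \<in> A"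
  shows "y\<^sup>\<bottom> \<sqsubseteq>\<^sub>1 x\<^sup>\<bottom>"
proof -
  have "x \<sqinter> (x\<^sup>\<bottom> \<squnion> y\<^sup>\<bottom>) = (x\<^sup>\<bottom> \<squnion> (x \<sqinter> y))\<^sup>\<bottom>"
    using assms by (simp add: compl_join compl_meet)
  also have "\<dots> = \<zero>"
    using assms by (simp add: sasaki_le_def)
  finally have "y \<squnion> (x\<^sup>\<bottom> \<sqinter> y\<^sup>\<bottom>) = \<one>"
    using assms weak_orthomodular[of "x\<^sup>\<bottom>" "y\<^sup>\<bottom>"] by simp
  then show ?thesis
    using assms by (simp add: sasaki_le_def meet_comm[of "y\<^sup>\<bottom>"])
qed

lemma sasaki_le_contrapos_iff: "x \<in> A \<Longrightarrow> y \<in> A \<Longrightarrow> y\<^sup>\<bottom> \<sqsubseteq>\<^sub>1 x\<^sup>\<bottom> \<longleftrightarrow> x \<sqsubseteq>\<^sub>1 y"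
  using sasaki_le_contrapos[of x y] sasaki_le_contrapos[of "y\<^sup>\<bottom>" "x\<^sup>\<bottom>"] by auto

lemma sasaki_le_antimono:
  assumes "x \<sqsubseteq> y" "y \<sqsubseteq>\<^sub>1 w" "x \<in> A" "y \<in> A" "w \<in> A"
  shows "x \<sqsubseteq>\<^sub>1 w"
proof -
  have "w \<squnion> (w\<^sup>\<bottom> \<sqinter> y\<^sup>\<bottom>) = \<one>"
    using assms sasaki_le_contrapos[of y w] by (simp add: sasaki_le_def)
  moreover have "w \<squnion> (w\<^sup>\<bottom> \<sqinter> y\<^sup>\<bottom>) \<sqsubseteq> w \<squnion> (w\<^sup>\<bottom> \<sqinter> x\<^sup>\<bottom>)"
    using assms by (intro join_mono meet_mono compl_le_compl) auto
  ultimately have "w\<^sup>\<bottom> \<sqsubseteq>\<^sub>1 x\<^sup>\<bottom>"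
    using assms one_le_iff by (simp add: sasaki_le_def)
  then show ?thesis
    using assms sasaki_le_contrapos_iff by blast
qed

lemma sasaki_le_trans_below:
  assumes "d \<sqsubseteq> x" "x \<sqsubseteq>\<^sub>1 d" "d \<sqsubseteq>\<^sub>1 w" "d \<in> A" "x \<in> A" "w \<in> A"
  shows "x \<sqsubseteq>\<^sub>1 w"
proof -
  define g where "g = x \<sqinter> (x \<sqinter> w)\<^sup>\<bottom>"
  have g: "g \<in> A"
    unfolding g_def using assms by simp
  have "d \<sqinter> g \<sqsubseteq> d \<sqinter> (d \<sqinter> w)\<^sup>\<bottom>"
    unfolding g_def using assms
    by (intro meet_mono le_meetI2 compl_le_compl) auto
  moreover have "d \<sqinter> (d \<sqinter> w)\<^sup>\<bottom> = \<zero>"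
  proof -
    have "(d\<^sup>\<bottom> \<squnion> (d \<sqinter> w))\<^sup>\<bottom> = \<zero>"
      using assms(3) by (simp add: sasaki_le_def)
    then show ?thesis
      using assms by (simp add: compl_join)
  qed
  ultimately have dg: "d \<sqinter> g = \<zero>"
    using assms g le_zero_iff by simp
  have "d \<squnion> x\<^sup>\<bottom> = \<one>"
    using assms by (simp add: sasaki_le_def le_def meet_comm[of d] join_comm[of d])
  moreover have "d \<squnion> x\<^sup>\<bottom> \<sqsubseteq> d \<squnion> (d\<^sup>\<bottom> \<sqinter> g\<^sup>\<bottom>)"
    unfolding g_def using assms
    by (intro join_mono le_meetI compl_le_compl) auto
  ultimately have "d \<squnion> (d\<^sup>\<bottom> \<sqinter> g\<^sup>\<bottom>) = \<one>"
    using assms g one_le_iff by simp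
  then have "(d \<squnion> (d\<^sup>\<bottom> \<sqinter> g\<^sup>\<bottom>))\<^sup>\<bottom> = \<zero>"
    by simp
  then have "d\<^sup>\<bottom> \<sqinter> (d \<squnion> g) = \<zero>"
    using assms g by (simp add: compl_join compl_meet)
  then have "g\<^sup>\<bottom> = \<one>"
    using weak_orthomodular[of d g] assms g dg by simp
  then show ?thesis
    unfolding g_def sasaki_le_def using assms by (simp add: compl_meet[of x "(x \<sqinter> w)\<^sup>\<bottom>"])
qed

lemma sasaki_le_trans:
  assumes "x \<sqsubseteq>\<^sub>1 y" "y \<sqsubseteq>\<^sub>1 w" "x \<in> A" "y \<in> A" "w \<in> A"
  shows "x \<sqsubseteq>\<^sub>1 w"
proof (rule sasaki_le_trans_below[of "x \<sqinter> y"])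
  show "x \<sqinter> y \<sqsubseteq>\<^sub>1 w"
    using assms sasaki_le_antimono[of "x \<sqinter> y" y w] by simp
  show "x \<sqsubseteq>\<^sub>1 x \<sqinter> y"
    using assms sasaki_le_iff_meet by blast
qed (use assms in simp_all)

lemma sasaki_le_mono:
  assumes "x \<sqsubseteq>\<^sub>1 y" "y \<sqsubseteq> w" "x \<in> A" "y \<in> A" "w \<in> A"
  shows "x \<sqsubseteq>\<^sub>1 w"
  using assms(1) le_imp_sasaki_le[OF assms(2,4,5)] by (rule sasaki_le_trans) (use assms in simp_all)

lemma sasaki_le_meetI:
  assumes "x \<sqsubseteq>\<^sub>1 y" "x \<sqsubseteq>\<^sub>1 w" "x \<in> A" "y \<in> A" "w \<in> A"
  shows "x \<sqsubseteq>\<^sub>1 y \<sqinter> w"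
proof -
  have "x \<sqinter> y \<sqsubseteq>\<^sub>1 w"
    using assms sasaki_le_antimono[of "x \<sqinter> y" x w] by simp
  then have "x \<sqinter> y \<sqsubseteq>\<^sub>1 x \<sqinter> y \<sqinter> w"
    using assms sasaki_le_iff_meet by simp
  moreover have "x \<sqsubseteq>\<^sub>1 x \<sqinter> y"
    using assms sasaki_le_iff_meet by blast
  ultimately have "x \<sqsubseteq>\<^sub>1 x \<sqinter> y \<sqinter> w"
    using assms sasaki_le_trans[of x "x \<sqinter> y"] by simp
  moreover have "x \<sqinter> y \<sqinter> w \<sqsubseteq> y \<sqinter> w"
    using assms by (simp add: meet_mono)
  ultimately show ?thesis
    using assms sasaki_le_mono by simp
qed

lemma sasaki_le_joinI:
  assumes "x \<sqsubseteq>\<^sub>1 w" "y \<sqsubseteq>\<^sub>1 w" "x \<in> A" "y \<in> A" "w \<in> A"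
  shows "x \<squnion> y \<sqsubseteq>\<^sub>1 w"
proof -
  have "w\<^sup>\<bottom> \<sqsubseteq>\<^sub>1 x\<^sup>\<bottom> \<sqinter> y\<^sup>\<bottom>"
    using assms by (intro sasaki_le_meetI sasaki_le_contrapos) auto
  then show ?thesis
    using assms sasaki_le_contrapos_iff[of "x \<squnion> y" w] by (simp add: compl_join)
qed

lemma sasaki_le_meet_mono:
  assumes "x \<sqsubseteq>\<^sub>1 y" "x' \<sqsubseteq>\<^sub>1 y'" "x \<in> A" "y \<in> A" "x' \<in> A" "y' \<in> A"
  shows "x \<sqinter> x' \<sqsubseteq>\<^sub>1 y \<sqinter> y'"
proof (rule sasaki_le_meetI)
  show "x \<sqinter> x' \<sqsubseteq>\<^sub>1 y"
    using assms sasaki_le_antimono[of "x \<sqinter> x'" x y] by simp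
  show "x \<sqinter> x' \<sqsubseteq>\<^sub>1 y'"
    using assms sasaki_le_antimono[of "x \<sqinter> x'" x' y'] by simp
qed (use assms in simp_all)

lemma sasaki_le_join_mono:
  assumes "x \<sqsubseteq>\<^sub>1 y" "x' \<sqsubseteq>\<^sub>1 y'" "x \<in> A" "y \<in> A" "x' \<in> A" "y' \<in> A"
  shows "x \<squnion> x' \<sqsubseteq>\<^sub>1 y \<squnion> y'"
proof (rule sasaki_le_joinI)
  show "x \<sqsubseteq>\<^sub>1 y \<squnion> y'"
    using assms sasaki_le_mono[of x y "y \<squnion> y'"] by simp
  show "x' \<sqsubseteq>\<^sub>1 y \<squnion> y'"
    using assms sasaki_le_mono[of x' y' "y \<squnion> y'"] by simp
qed (use assms in simp_all)

lemma sasaki_le_orthomodular_dual: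
  assumes "f \<sqsubseteq> k" "f \<in> A" "k \<in> A"
  shows "k \<sqinter> (k\<^sup>\<bottom> \<squnion> f) \<sqsubseteq>\<^sub>1 f"
proof -
  have "f\<^sup>\<bottom> \<sqsubseteq>\<^sub>1 k\<^sup>\<bottom> \<squnion> (k \<sqinter> f\<^sup>\<bottom>)"
    using assms sasaki_le_orthomodular[of "k\<^sup>\<bottom>" "f\<^sup>\<bottom>"] compl_le_compl by simp
  then show ?thesis
    using assms sasaki_le_contrapos_iff[of "k \<sqinter> (k\<^sup>\<bottom> \<squnion> f)" f]
    by (simp add: compl_meet compl_join)
qed

lemma sasaki_le_meet_split:
  assumes "x \<sqsubseteq>\<^sub>1 y\<^sup>\<bottom> \<squnion> (x \<sqinter> y)" "x \<in> A" "y \<in> A"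
  shows "x \<sqsubseteq>\<^sub>1 (x \<sqinter> y) \<squnion> (x \<sqinter> y\<^sup>\<bottom>)"
proof -
  define w where "w = x \<sqinter> y"
  have w: "w \<in> A" "w \<sqsubseteq> x" "w \<sqsubseteq> y"
    unfolding w_def using assms by simp_all
  have "w\<^sup>\<bottom> \<sqinter> x \<sqsubseteq>\<^sub>1 w\<^sup>\<bottom> \<sqinter> (y\<^sup>\<bottom> \<squnion> w)"
    using assms w unfolding w_def by (intro sasaki_le_meet_mono sasaki_le_refl) simp_all
  moreover have "w\<^sup>\<bottom> \<sqinter> (y\<^sup>\<bottom> \<squnion> w) \<sqsubseteq>\<^sub>1 y\<^sup>\<bottom>"
    using assms w sasaki_le_orthomodular_dual[of "y\<^sup>\<bottom>" "w\<^sup>\<bottom>"] compl_le_compl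
    by (simp add: join_comm[of "y\<^sup>\<bottom>"])
  ultimately have "w\<^sup>\<bottom> \<sqinter> x \<sqsubseteq>\<^sub>1 y\<^sup>\<bottom>"
    by (rule sasaki_le_trans) (use assms w in simp_all)
  with le_imp_sasaki_le[of "w\<^sup>\<bottom> \<sqinter> x" x] have "w\<^sup>\<bottom> \<sqinter> x \<sqsubseteq>\<^sub>1 x \<sqinter> y\<^sup>\<bottom>"
    using assms w by (simp add: sasaki_le_meetI)
  then have "w \<squnion> (w\<^sup>\<bottom> \<sqinter> x) \<sqsubseteq>\<^sub>1 w \<squnion> (x \<sqinter> y\<^sup>\<bottom>)"
    using assms w by (intro sasaki_le_join_mono sasaki_le_refl) simp_all
  with sasaki_le_orthomodular[OF w(2) w(1) assms(2)] have "x \<sqsubseteq>\<^sub>1 w \<squnion> (x \<sqinter> y\<^sup>\<bottom>)"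
    by (rule sasaki_le_trans) (use assms w in simp_all)
  then show ?thesis
    by (simp add: w_def)
qed

lemma meet_sasaki_le_meet:
  assumes "f \<sqsubseteq> k" "n \<sqsubseteq> k" "x \<sqsubseteq> k\<^sup>\<bottom> \<squnion> f" "x \<sqsubseteq> k\<^sup>\<bottom> \<squnion> n"
    and "f \<in> A" "n \<in> A" "k \<in> A" "x \<in> A"
  shows "x \<sqinter> k \<sqsubseteq>\<^sub>1 f \<sqinter> n"
proof (rule sasaki_le_meetI)
  have "x \<sqinter> k \<sqsubseteq> k \<sqinter> (k\<^sup>\<bottom> \<squnion> f)"
    using assms by (simp add: le_meet_iff le_meetI1)
  with sasaki_le_orthomodular_dual[of f k] show "x \<sqinter> k \<sqsubseteq>\<^sub>1 f"
    using assms sasaki_le_antimono by simp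
  have "x \<sqinter> k \<sqsubseteq> k \<sqinter> (k\<^sup>\<bottom> \<squnion> n)"
    using assms by (simp add: le_meet_iff le_meetI1)
  with sasaki_le_orthomodular_dual[of n k] show "x \<sqinter> k \<sqsubseteq>\<^sub>1 n"
    using assms sasaki_le_antimono by simp
qed (use assms in simp_all)

lemma sasaki_le_compl_join_meet:
  assumes "f \<sqsubseteq> k" "n \<sqsubseteq> k" "x \<sqsubseteq> k\<^sup>\<bottom> \<squnion> f" "x \<sqsubseteq> k\<^sup>\<bottom> \<squnion> n" "f \<sqinter> n \<sqsubseteq> x"
    and "f \<in> A" "n \<in> A" "k \<in> A" "x \<in> A"
  shows "x \<sqsubseteq>\<^sub>1 k\<^sup>\<bottom> \<squnion> (x \<sqinter> k)"
proof -
  define v where "v = (k\<^sup>\<bottom> \<squnion> f) \<sqinter> (k\<^sup>\<bottom> \<squnion> n)"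
  have v: "v \<in> A" "x \<sqsubseteq> v" "k\<^sup>\<bottom> \<sqsubseteq> v"
    unfolding v_def using assms by (simp_all add: le_meetI)
  have "v \<sqsubseteq>\<^sub>1 k\<^sup>\<bottom> \<squnion> (k \<sqinter> v)"
    using assms v sasaki_le_orthomodular[of "k\<^sup>\<bottom>" v] by simp
  moreover have "k\<^sup>\<bottom> \<squnion> (k \<sqinter> v) \<sqsubseteq>\<^sub>1 k\<^sup>\<bottom> \<squnion> (f \<sqinter> n)"
  proof (rule sasaki_le_join_mono)
    show "k \<sqinter> v \<sqsubseteq>\<^sub>1 f \<sqinter> n"
      using assms v meet_sasaki_le_meet[of f k n v]
      unfolding v_def by (simp add: meet_comm[of k])
  qed (use assms v sasaki_le_refl in simp_all)
  ultimately have "v \<sqsubseteq>\<^sub>1 k\<^sup>\<bottom> \<squnion> (f \<sqinter> n)"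
    by (rule sasaki_le_trans) (use assms v in simp_all)
  with v(2) have "x \<sqsubseteq>\<^sub>1 k\<^sup>\<bottom> \<squnion> (f \<sqinter> n)"
    by (rule sasaki_le_antimono) (use assms v in simp_all)
  moreover have "k\<^sup>\<bottom> \<squnion> (f \<sqinter> n) \<sqsubseteq> k\<^sup>\<bottom> \<squnion> (x \<sqinter> k)"
  proof (rule join_mono)
    show "f \<sqinter> n \<sqsubseteq> x \<sqinter> k"
      using assms by (simp add: le_meetI le_meetI1)
  qed (use assms in simp_all)
  ultimately show ?thesis
    by (rule sasaki_le_mono) (use assms in simp_all)
qed

lemma sasaki_le_distrib:
  assumes "e \<sqsubseteq> k\<^sup>\<bottom>" "g \<sqsubseteq> k\<^sup>\<bottom>" "f \<sqsubseteq> k" "n \<sqsubseteq> k"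
    and "e \<in> A" "f \<in> A" "g \<in> A" "n \<in> A" "k \<in> A"
  shows "(e \<squnion> f) \<sqinter> (g \<squnion> n) \<sqsubseteq>\<^sub>1 (e \<sqinter> g) \<squnion> (f \<sqinter> n)"
proof -
  define x where "x = (e \<squnion> f) \<sqinter> (g \<squnion> n)"
  have "e \<squnion> f \<sqsubseteq> k\<^sup>\<bottom> \<squnion> f" "g \<squnion> n \<sqsubseteq> k\<^sup>\<bottom> \<squnion> n" "e \<squnion> f \<sqsubseteq> k \<squnion> e" "g \<squnion> n \<sqsubseteq> k \<squnion> g"
    using assms by (simp_all add: join_le_iff le_joinI1)
  then have x: "x \<in> A" "x \<sqsubseteq> k\<^sup>\<bottom> \<squnion> f" "x \<sqsubseteq> k\<^sup>\<bottom> \<squnion> n" "x \<sqsubseteq> k \<squnion> e" "x \<sqsubseteq> k \<squnion> g"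
    unfolding x_def using assms by (simp_all add: le_meetI1 le_meetI2)
  have "f \<sqinter> n \<sqsubseteq> x"
    unfolding x_def using assms by (simp add: le_meet_iff le_joinI2 le_meetI1 le_meetI2)
  with x have "x \<sqsubseteq>\<^sub>1 k\<^sup>\<bottom> \<squnion> (x \<sqinter> k)"
    using assms by (intro sasaki_le_compl_join_meet[of f k n]) simp_all
  then have "x \<sqsubseteq>\<^sub>1 (x \<sqinter> k) \<squnion> (x \<sqinter> k\<^sup>\<bottom>)"
    by (rule sasaki_le_meet_split) (use assms x in simp_all)
  moreover have "(x \<sqinter> k) \<squnion> (x \<sqinter> k\<^sup>\<bottom>) \<sqsubseteq>\<^sub>1 (f \<sqinter> n) \<squnion> (e \<sqinter> g)"
  proof (rule sasaki_le_join_mono)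
    show "x \<sqinter> k \<sqsubseteq>\<^sub>1 f \<sqinter> n"
      using assms x by (intro meet_sasaki_le_meet) simp_all
    show "x \<sqinter> k\<^sup>\<bottom> \<sqsubseteq>\<^sub>1 e \<sqinter> g"
      using assms x by (intro meet_sasaki_le_meet) simp_all
  qed (use assms x in simp_all)
  ultimately have "x \<sqsubseteq>\<^sub>1 (f \<sqinter> n) \<squnion> (e \<sqinter> g)"
    by (rule sasaki_le_trans) (use assms x in simp_all)
  then show ?thesis
    unfolding x_def using assms by (simp add: join_comm[of "f \<sqinter> n"])
qed

abbreviation biimp :: "'a \<Rightarrow> 'a \<Rightarrow> 'a" (infix \<open>\<leftrightarrow>\<close> 60)
  where "a \<leftrightarrow> b \<equiv> bieq (\<sqinter>) (\<squnion>) compl a b"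

lemma bieq_closed [simp]: "a \<in> A \<Longrightarrow> b \<in> A \<Longrightarrow> a \<leftrightarrow> b \<in> A"
  by (simp add: bieq_def)

lemma compl_join_bieq_eq_one:
  assumes "p \<sqinter> (q \<squnion> r) \<sqsubseteq>\<^sub>1 q \<sqinter> r" "p \<in> A" "q \<in> A" "r \<in> A"
  shows "p\<^sup>\<bottom> \<squnion> (q \<leftrightarrow> r) = \<one>"
proof -
  define m where "m = q \<sqinter> r"
  define x where "x = p \<sqinter> (q \<leftrightarrow> r)\<^sup>\<bottom>"
  have mem: "m \<in> A" "x \<in> A"
    unfolding m_def x_def using assms by simp_all
  have x_eq: "x = p \<sqinter> (m\<^sup>\<bottom> \<sqinter> (q \<squnion> r))"
    unfolding x_def m_def bieq_def using assms by (simp add: compl_join compl_meet)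
  have "x \<sqsubseteq>\<^sub>1 m"
    using assms mem sasaki_le_antimono[of x "p \<sqinter> (q \<squnion> r)" m]
    unfolding x_eq m_def by (simp add: le_meet_iff le_meetI2)
  moreover have "x \<sqsubseteq>\<^sub>1 m\<^sup>\<bottom>"
    using assms mem by (intro le_imp_sasaki_le) (simp_all add: x_eq le_meet_iff le_meetI2)
  ultimately have "x \<sqsubseteq>\<^sub>1 m \<sqinter> m\<^sup>\<bottom>"
    by (rule sasaki_le_meetI) (use mem in simp_all)
  then have "x = \<zero>"
    using mem by (simp add: meet_compl sasaki_le_zeroD)
  then have "x\<^sup>\<bottom> = \<one>"
    by simp
  moreover have "x\<^sup>\<bottom> = p\<^sup>\<bottom> \<squnion> (q \<leftrightarrow> r)"
    unfolding x_def using assms by (simp add: compl_meet[of p "(q \<leftrightarrow> r)\<^sup>\<bottom>"])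
  ultimately show ?thesis
    by simp
qed

lemma bieq_meet_join_sasaki_le:
  assumes "a \<in> A" "b \<in> A" "c \<in> A"
  shows "(a \<leftrightarrow> b) \<sqinter> ((a \<leftrightarrow> c) \<squnion> (b \<leftrightarrow> c)) \<sqsubseteq>\<^sub>1 (a \<leftrightarrow> c) \<sqinter> (b \<leftrightarrow> c)"
proof -
  define e where "e = a \<sqinter> b"
  define f where "f = a\<^sup>\<bottom> \<sqinter> b\<^sup>\<bottom>"
  define g where "g = (a \<sqinter> c) \<squnion> (b \<sqinter> c)"
  define n where "n = (a\<^sup>\<bottom> \<sqinter> c\<^sup>\<bottom>) \<squnion> (b\<^sup>\<bottom> \<sqinter> c\<^sup>\<bottom>)"
  define k where "k = f \<squnion> n"
  note defs = e_def f_def g_def n_def k_def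
  have mem: "e \<in> A" "f \<in> A" "g \<in> A" "n \<in> A" "k \<in> A"
    unfolding defs using assms by simp_all
  have "f \<sqsubseteq> e\<^sup>\<bottom>" "n \<sqsubseteq> e\<^sup>\<bottom>"
    unfolding defs using assms
    by (auto simp: join_le_iff intro: le_compl_trans[of _ "a\<^sup>\<bottom>"] le_compl_trans[of _ "b\<^sup>\<bottom>"])
  then have "e \<sqsubseteq> k\<^sup>\<bottom>"
    using mem le_compl_swap[of k e] by (simp add: k_def join_le_iff)
  have "g \<sqsubseteq> f\<^sup>\<bottom>" "n \<sqsubseteq> g\<^sup>\<bottom>"
    unfolding defs using assms
    by (auto simp: join_le_iff intro: le_compl_trans[of _ a] le_compl_trans[of _ b]
        le_compl_trans[of _ "c\<^sup>\<bottom>"])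
  then have "g \<sqsubseteq> k\<^sup>\<bottom>"
    using mem le_compl_swap[of g f] le_compl_swap[of k g] by (simp add: k_def join_le_iff)
  moreover have "f \<sqsubseteq> k" "n \<sqsubseteq> k"
    unfolding k_def using mem by simp_all
  ultimately have distrib: "(e \<squnion> f) \<sqinter> (g \<squnion> n) \<sqsubseteq>\<^sub>1 (e \<sqinter> g) \<squnion> (f \<sqinter> n)"
    using \<open>e \<sqsubseteq> k\<^sup>\<bottom>\<close> mem by (intro sasaki_le_distrib)
  have lower: "(a \<leftrightarrow> b) \<sqinter> ((a \<leftrightarrow> c) \<squnion> (b \<leftrightarrow> c)) \<sqsubseteq> (e \<squnion> f) \<sqinter> (g \<squnion> n)"
    unfolding bieq_def defs using assms
    by (intro meet_mono) (auto simp: join_le_iff intro: le_joinI1 le_joinI2)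
  have upper: "(e \<sqinter> g) \<squnion> (f \<sqinter> n) \<sqsubseteq> (a \<leftrightarrow> c) \<sqinter> (b \<leftrightarrow> c)"
  proof -
    have "e \<sqinter> g \<sqsubseteq> a \<sqinter> c" "e \<sqinter> g \<sqsubseteq> b \<sqinter> c"
      and "f \<sqinter> n \<sqsubseteq> a\<^sup>\<bottom> \<sqinter> c\<^sup>\<bottom>" "f \<sqinter> n \<sqsubseteq> b\<^sup>\<bottom> \<sqinter> c\<^sup>\<bottom>"
      unfolding defs using assms
      by (auto simp: le_meet_iff join_le_iff intro: le_meetI1 le_meetI2)
    then show ?thesis
      unfolding bieq_def using assms mem
      by (auto simp: join_le_iff le_meet_iff intro: le_joinI1 le_joinI2)
  qed
  from lower distrib have "(a \<leftrightarrow> b) \<sqinter> ((a \<leftrightarrow> c) \<squnion> (b \<leftrightarrow> c)) \<sqsubseteq>\<^sub>1 (e \<sqinter> g) \<squnion> (f \<sqinter> n)"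
    by (rule sasaki_le_antimono) (use assms mem in simp_all)
  from this upper show ?thesis
    by (rule sasaki_le_mono) (use assms mem in simp_all)
qed

theorem impl0_bieq_bieq_eq_one:
  assumes "a \<in> A" "b \<in> A" "c \<in> A"
  shows "impl0 (\<squnion>) compl (a \<leftrightarrow> b) ((a \<leftrightarrow> c) \<leftrightarrow> (b \<leftrightarrow> c)) = \<one>"
  unfolding impl0_def using assms
  by (intro compl_join_bieq_eq_one bieq_meet_join_sasaki_le) simp_all

end

lemma ortholattice_on_of_meet_semilattice:
  assumes meet_closed: "\<And>x y. x \<in> A \<Longrightarrow> y \<in> A \<Longrightarrow> meet x y \<in> A"
    and compl_closed: "\<And>x. x \<in> A \<Longrightarrow> compl x \<in> A"
    and zero_closed: "z \<in> A"
    and meet_comm: "\<And>x y. x \<in> A \<Longrightarrow> y \<in> A \<Longrightarrow> meet x y = meet y x"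
    and meet_assoc: "\<And>x y w. x \<in> A \<Longrightarrow> y \<in> A \<Longrightarrow> w \<in> A \<Longrightarrow> meet (meet x y) w = meet x (meet y w)"
    and meet_idem: "\<And>x. x \<in> A \<Longrightarrow> meet x x = x"
    and zero_meet: "\<And>x. x \<in> A \<Longrightarrow> meet z x = z"
    and compl_compl: "\<And>x. x \<in> A \<Longrightarrow> compl (compl x) = x"
    and compl_antitone: "\<And>x y. x \<in> A \<Longrightarrow> y \<in> A \<Longrightarrow> meet x y = x \<Longrightarrow> meet (compl y) (compl x) = compl y"
    and meet_compl: "\<And>x. x \<in> A \<Longrightarrow> meet x (compl x) = z"
  shows "ortholattice_on A meet (\<lambda>x y. compl (meet (compl x) (compl y))) compl z (compl z)"
proof -
  have meet_lower: "meet (meet x y) x = meet x y" if "x \<in> A" "y \<in> A" for x y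
    using that by (metis meet_assoc meet_comm meet_idem)
  show ?thesis
    unfolding ortholattice_on_def
  proof (intro conjI ballI)
    fix x y w assume "x \<in> A" "y \<in> A" "w \<in> A"
    then show "meet (meet x y) w = meet x (meet y w)"
      "compl (meet (compl (compl (meet (compl x) (compl y)))) (compl w))
        = compl (meet (compl x) (compl (compl (meet (compl y) (compl w)))))"
      by (simp_all add: compl_closed compl_compl meet_closed meet_assoc)
  next
    fix x y assume "x \<in> A" "y \<in> A"
    then show "meet x y = meet y x"
      "compl (meet (compl x) (compl y)) = compl (meet (compl y) (compl x))"
      by (simp_all add: meet_comm compl_closed)
    show "meet x (compl (meet (compl x) (compl y))) = x"
      using compl_antitone[OF meet_closed compl_closed meet_lower] \<open>x \<in> A\<close> \<open>y \<in> A\<close>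
      by (simp add: compl_closed compl_compl)
    show "compl (meet (compl x) (compl (meet x y))) = x"
      using compl_antitone[OF meet_closed _ meet_lower] \<open>x \<in> A\<close> \<open>y \<in> A\<close>
      by (simp add: compl_closed compl_compl)
  next
    fix x assume "x \<in> A"
    then show "compl (meet (compl x) (compl (compl x))) = compl z"
      using meet_compl[of "compl x"] by (simp add: compl_closed compl_compl)
  qed (simp_all add: assms(1-3,7-10))
qed

unbundle bit_operations_syntax

(* Elements are 6-bit masks with bitwise conjunction as meet; the complement exchanges
   8 k and 9 (7 - k) for k \<le> 6. The carrier avoids 1, which the simplifier rewrites to
   Suc 0, and AND is evaluated on int via and_nat_def, so intermediate values stay
   numerals. *)
definition example_carrier :: "nat set"
  where "example_carrier = {0, 8, 16, 24, 32, 40, 48, 9, 18, 27, 36, 45, 54, 63}"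

definition example_compl :: "nat \<Rightarrow> nat"
  where "example_compl x =
    (if x = 0 \<or> x = 63 then 63 - x else if x mod 9 = 0 then 8 * (7 - x div 9) else 9 * (7 - x div 8))"

definition example_join :: "nat \<Rightarrow> nat \<Rightarrow> nat"
  where "example_join x y = example_compl (example_compl x AND example_compl y)"

lemma example_compl_values:
  "example_compl 0 = 63" "example_compl 8 = 54" "example_compl 16 = 45" "example_compl 24 = 36"
  "example_compl 32 = 27" "example_compl 40 = 18" "example_compl 48 = 9" "example_compl 9 = 48"
  "example_compl 18 = 40" "example_compl 27 = 32" "example_compl 36 = 24" "example_compl 45 = 16"
  "example_compl 54 = 8" "example_compl 63 = 0"
  by (simp_all add: example_compl_def)

lemma example_ortholattice:
  "ortholattice_on example_carrier (AND) example_join example_compl 0 (example_compl 0)"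
  unfolding example_join_def
proof (rule ortholattice_on_of_meet_semilattice)
  fix x y
  assume "x \<in> example_carrier" "y \<in> example_carrier"
  then show "x AND y \<in> example_carrier"
    and "x AND y = x \<Longrightarrow> example_compl y AND example_compl x = example_compl y"
    unfolding example_carrier_def by (auto simp: example_compl_values and_nat_def)
next
  fix x
  assume "x \<in> example_carrier"
  then show "example_compl x \<in> example_carrier"
    and "example_compl (example_compl x) = x"
    and "x AND example_compl x = 0"
    unfolding example_carrier_def by (auto simp: example_compl_values and_nat_def)
qed (simp_all add: example_carrier_def ac_simps)

lemma example_woml: "woml_on example_carrier (AND) example_join example_compl 0 63"
  unfolding woml_on_def
proof
  show "ortholattice_on example_carrier (AND) example_join example_compl 0 63"
    using example_ortholattice by (simp add: example_compl_values)
  show "\<forall>a\<in>example_carrier. \<forall>b\<in>example_carrier. example_join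
          (example_join (example_compl a AND example_join a b) (example_compl b)) (a AND b) = 63"
    by (simp add: example_carrier_def example_join_def example_compl_values and_nat_def)
qed

lemma example_not_distributive:
  "\<exists>a\<in>example_carrier. \<exists>b\<in>example_carrier. \<exists>c\<in>example_carrier.
     bieq (AND) example_join example_compl a b
       AND example_join (bieq (AND) example_join example_compl b c) (bieq (AND) example_join example_compl a c)
     \<noteq> example_join
         (bieq (AND) example_join example_compl a b AND bieq (AND) example_join example_compl b c)
         (bieq (AND) example_join example_compl a b AND bieq (AND) example_join example_compl a c)"
  unfolding example_carrier_def
  by (rule bexI[of _ 0], rule bexI[of _ 24], rule bexI[of _ 9])
    (simp_all add: bieq_def example_join_def example_compl_values and_nat_def)

theorem theorem5:
  shows "(\<forall>(A :: 'a set) meet join compl z u.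
            woml_on A meet join compl z u \<longrightarrow>
            (\<forall>a\<in>A. \<forall>b\<in>A. \<forall>c\<in>A.
               impl0 join compl (bieq meet join compl a b)
                 (bieq meet join compl (bieq meet join compl a c) (bieq meet join compl b c)) = u))
       \<and> (\<exists>(A :: nat set) meet join compl z u.
            woml_on A meet join compl z u \<and>
            (\<exists>a\<in>A. \<exists>b\<in>A. \<exists>c\<in>A.
               meet (bieq meet join compl a b)
                    (join (bieq meet join compl b c) (bieq meet join compl a c))
               \<noteq> join (meet (bieq meet join compl a b) (bieq meet join compl b c))
                      (meet (bieq meet join compl a b) (bieq meet join compl a c))))"
proof (intro conjI allI impI ballI)
  fix A :: "'a set" and meet join compl z u a b c
  assume "woml_on A meet join compl z u" "a \<in> A" "b \<in> A" "c \<in> A"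
  then show "impl0 join compl (bieq meet join compl a b)
      (bieq meet join compl (bieq meet join compl a c) (bieq meet join compl b c)) = u"
    by (rule woml.impl0_bieq_bieq_eq_one[OF woml_on_imp_woml])
qed (use example_woml example_not_distributive in meson)

end
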